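(* Let $\mu>0$, $\sigma\ge0$ and $r=\sigma/\mu$. Then the robust approximation ratio for selling a single item satisfies \[\mathrm{APX}(\mu,\sigma)=\inf_{A}\sup_{F\in\mathbb{F}_{\mu,\sigma}}\frac{\mathrm{OPT}(F)}{\mathrm{REV}(A;F)}\ \ge\ 1+\ln(1+r^2),\] where the infimum is over all probability distributions $A$ over nonnegative prices.
   Context: A nonnegative real random variable is $(\mu,\sigma)$-distributed if its expectation is $\mu$ and its standard deviation is at most $\sigma$; $\mathbb{F}_{\mu,\sigma}$ is the class of such distributions. Single item, single buyer with value $X\sim F$. A (possibly randomized) truthful mechanism is identified with a probability distribution $A$ over prices $p\ge0$: a price $p\sim A$ is drawn and the buyer buys iff $X\ge p$. $\mathrm{REV}(p;F)=p\Pr[X\ge p]$, $\mathrm{REV}(A;F)=\mathbb{E}_{p\sim A}[\mathrm{REV}(p;F)]$, $\mathrm{OPT}(F)=\sup_{p\ge0}\mathrm{REV}(p;F)$ (the optimal revenue over all truthful mechanisms). Ratios with zero denominator are interpreted as $+\infty$. *)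

theory Defs
  imports "HOL-Probability.Probability"
begin

definition mu_sigma_dist :: "real \<Rightarrow> real \<Rightarrow> real measure \<Rightarrow> bool" where
  "mu_sigma_dist \<mu> \<sigma> F \<longleftrightarrow>
     prob_space F \<and> sets F = sets borel \<and> (AE x in F. 0 \<le> x) \<and>
     integrable F (\<lambda>x. x) \<and> integrable F (\<lambda>x. x\<^sup>2) \<and>
     (\<integral>x. x \<partial>F) = \<mu> \<and> (\<integral>x. (x - \<mu>)\<^sup>2 \<partial>F) \<le> \<sigma>\<^sup>2"

definition mechanism :: "real measure \<Rightarrow> bool" where
  "mechanism A \<longleftrightarrow> prob_space A \<and> sets A = sets borel \<and> (AE p in A. 0 \<le> p)"

definition REV_price :: "real \<Rightarrow> real measure \<Rightarrow> real" where
  "REV_price p F = p * measure F {p..}"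

definition REV_mech :: "real measure \<Rightarrow> real measure \<Rightarrow> real" where
  "REV_mech A F = (\<integral>p. REV_price p F \<partial>A)"

definition OPT :: "real measure \<Rightarrow> ereal" where
  "OPT F = (SUP p\<in>{0..}. ereal (REV_price p F))"

definition ratio :: "ereal \<Rightarrow> ereal \<Rightarrow> ereal" where
  "ratio a b = (if b = 0 then \<infinity> else a / b)"

definition APX :: "real \<Rightarrow> real \<Rightarrow> ereal" where
  "APX \<mu> \<sigma> = (INF A\<in>{A. mechanism A}. SUP F\<in>{F. mu_sigma_dist \<mu> \<sigma> F}.
                  ratio (OPT F) (ereal (REV_mech A F)))"

end

theory Submission
  imports Defs "HOL-Real_Asymp.Real_Asymp"
begin

text \<open>The two-point distributions with value \<open>t\<close> with probability \<open>\<mu>/t\<close> and value 0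
  otherwise. They are \<open>(\<mu>,\<sigma>)\<close>-distributed for \<open>\<mu> \<le> t \<le> T = \<mu>(1 + r\<^sup>2)\<close>, have \<open>OPT = \<mu>\<close>, and a
  mechanism \<open>A\<close> earns \<open>(\<mu>/t) G(t)\<close> from them, where \<open>G(t) = E\<^sub>A[p \<cdot> 1{p \<le> t}]\<close>; so its ratio
  is \<open>t / G(t)\<close>. Weigh \<open>t\<close> by \<open>dt/t\<^sup>2\<close> on \<open>[\<mu>, T]\<close> plus an atom \<open>1/T\<close> at \<open>T\<close>: a single price
  \<open>p\<close> then earns at most \<open>p / max p \<mu> \<le> 1\<close> in total, so \<open>\<integral> G \<le> 1\<close>, whereas \<open>\<integral> t = 1 + ln (T/\<mu>)\<close>.
  Hence \<open>t / G(t) \<ge> 1 + ln (1 + r\<^sup>2)\<close> for some \<open>t\<close>; to avoid integrating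
  over \<open>t\<close>, the weights are discretised on a geometric grid that is refined in the limit.\<close>

definition two_point :: "real \<Rightarrow> real \<Rightarrow> real measure" where
  "two_point q t = distr (measure_pmf (bernoulli_pmf q)) borel (\<lambda>b. if b then t else 0)"

lemma sets_two_point [simp, measurable_cong]: "sets (two_point q t) = sets borel"
  by (simp add: two_point_def)

lemma prob_space_two_point: "prob_space (two_point q t)"
  unfolding two_point_def by (rule measure_pmf.prob_space_distr) simp

lemma integrable_two_point:
  "g \<in> borel_measurable borel \<Longrightarrow> integrable (two_point q t) (g :: real \<Rightarrow> real)"
  by (simp add: two_point_def integrable_distr_eq integrable_measure_pmf_finite)

lemma integral_two_point:
  assumes "0 \<le> q" "q \<le> 1" and [measurable]: "g \<in> borel_measurable borel"
  shows "(\<integral>x. g x \<partial>two_point q t) = q * g t + (1 - q) * g 0"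
proof -
  have "(\<integral>x. g x \<partial>two_point q t)
      = (\<integral>b. g (if b then t else 0) \<partial>measure_pmf (bernoulli_pmf q))"
    unfolding two_point_def by (rule integral_distr) auto
  also have "\<dots> = (\<Sum>b\<in>UNIV. pmf (bernoulli_pmf q) b *\<^sub>R g (if b then t else 0))"
    by (rule integral_measure_pmf) auto
  finally show ?thesis
    using assms by (simp add: UNIV_bool)
qed

lemma AE_two_point: "AE x in two_point q t. x = 0 \<or> x = t"
  unfolding two_point_def by (subst AE_distr_iff) (auto simp: AE_measure_pmf_iff)

lemma measure_two_point_atLeast:
  assumes "0 \<le> q" "q \<le> 1"
  shows "measure (two_point q t) {p..} = q * of_bool (p \<le> t) + (1 - q) * of_bool (p \<le> 0)"
proof -
  have "measure (two_point q t) {p..}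
      = measure (measure_pmf (bernoulli_pmf q)) ((\<lambda>b. if b then t else 0) -` {p..})"
    unfolding two_point_def by (subst measure_distr) auto
  also have "\<dots> = (\<Sum>b\<in>(\<lambda>b. if b then t else 0) -` {p..}. pmf (bernoulli_pmf q) b)"
    by (rule measure_measure_pmf_finite) simp
  also have "(\<lambda>b. if b then t else 0) -` {p..}
      = (if p \<le> t then {True} else {}) \<union> (if p \<le> 0 then {False} else {})"
    by (auto split: if_splits)
  finally show ?thesis
    using assms by auto
qed

lemma mu_sigma_dist_two_point:
  assumes "0 < \<mu>" "\<mu> \<le> t" "\<mu> * t \<le> \<mu>\<^sup>2 + \<sigma>\<^sup>2"
  shows "mu_sigma_dist \<mu> \<sigma> (two_point (\<mu> / t) t)"
proof -
  have "0 < t" and q: "0 \<le> \<mu> / t" "\<mu> / t \<le> 1"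
    using assms by auto
  have "(\<integral>x. (x - \<mu>)\<^sup>2 \<partial>two_point (\<mu> / t) t)
      = \<mu> / t * (t - \<mu>)\<^sup>2 + (1 - \<mu> / t) * \<mu>\<^sup>2"
    using integral_two_point[OF q, of "\<lambda>x. (x - \<mu>)\<^sup>2"] by simp
  also have "\<dots> = \<mu> * t - \<mu>\<^sup>2"
    using \<open>0 < t\<close> by (simp add: field_simps power2_eq_square)
  finally have "(\<integral>x. (x - \<mu>)\<^sup>2 \<partial>two_point (\<mu> / t) t) \<le> \<sigma>\<^sup>2"
    using assms(3) by simp
  moreover have "(\<integral>x. x \<partial>two_point (\<mu> / t) t) = \<mu>"
    using integral_two_point[OF q, of "\<lambda>x. x"] \<open>0 < t\<close> by simp
  moreover have "AE x in two_point (\<mu> / t) t. 0 \<le> x"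
    using AE_two_point by eventually_elim (use \<open>0 < t\<close> in auto)
  ultimately show ?thesis
    unfolding mu_sigma_dist_def by (simp add: prob_space_two_point integrable_two_point)
qed

lemma OPT_two_point_ge:
  assumes "0 \<le> q" "q \<le> 1" "0 \<le> t"
  shows "ereal (q * t) \<le> OPT (two_point q t)"
proof -
  have "REV_price t (two_point q t) = q * t"
    unfolding REV_price_def measure_two_point_atLeast[OF assms(1,2)] using assms by auto
  then show ?thesis
    unfolding OPT_def using \<open>0 \<le> t\<close> by (metis SUP_upper atLeast_iff)
qed

lemma ereal_le_ratio:
  assumes "ereal c \<le> a" "0 \<le> R" "R * S \<le> c"
  shows "ereal S \<le> ratio a (ereal R)"
proof (cases "R = 0")
  case False
  then have "0 < R"
    using \<open>0 \<le> R\<close> by simp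
  then have "ereal S \<le> ereal c / ereal R"
    using \<open>R * S \<le> c\<close> by (simp add: pos_le_divide_eq mult.commute)
  also have "\<dots> \<le> a / ereal R"
    using \<open>ereal c \<le> a\<close> \<open>0 < R\<close> by (intro ereal_divide_right_mono) auto
  finally show ?thesis
    using False by (simp add: ratio_def)
qed (simp add: ratio_def)

definition posted_revenue :: "real \<Rightarrow> real \<Rightarrow> real" where
  "posted_revenue t p = (if 0 \<le> p \<and> p \<le> t then p else 0)"

lemma borel_measurable_posted_revenue [measurable]: "posted_revenue t \<in> borel_measurable borel"
  unfolding posted_revenue_def by measurable

lemma borel_measurable_mechanism:
  "mechanism A \<Longrightarrow> f \<in> borel_measurable borel \<Longrightarrow> f \<in> borel_measurable A"
  unfolding mechanism_def using measurable_cong_sets by blast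

lemma integrable_posted_revenue:
  assumes "mechanism A"
  shows "integrable A (posted_revenue t)"
proof -
  interpret prob_space A
    using assms unfolding mechanism_def by simp
  show ?thesis
  proof (rule integrable_const_bound[where B = "\<bar>t\<bar>"])
    show "AE p in A. norm (posted_revenue t p) \<le> \<bar>t\<bar>"
      by (intro AE_I2) (simp add: posted_revenue_def)
  qed (simp add: borel_measurable_mechanism[OF assms])
qed

lemma REV_mech_two_point:
  assumes A: "mechanism A" and "0 \<le> q" "q \<le> 1"
  shows "REV_mech A (two_point q t) = q * (\<integral>p. posted_revenue t p \<partial>A)"
proof -
  have "REV_mech A (two_point q t) = (\<integral>p. q * posted_revenue t p \<partial>A)"
    unfolding REV_mech_def REV_price_def measure_two_point_atLeast[OF assms(2,3)]
  proof (rule integral_cong_AE)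
    have "AE p in A. 0 \<le> p"
      using A unfolding mechanism_def by simp
    then show "AE p in A. p * (q * of_bool (p \<le> t) + (1 - q) * of_bool (p \<le> 0))
                         = q * posted_revenue t p"
      by eventually_elim (auto simp: posted_revenue_def)
  qed (simp_all add: borel_measurable_mechanism[OF A])
  then show ?thesis
    by simp
qed

lemma ratio_two_point_ge:
  assumes A: "mechanism A" and "0 < \<mu>" "\<mu> \<le> t"
    and G: "(\<integral>p. posted_revenue t p \<partial>A) * S \<le> t"
  shows "ereal S \<le> ratio (OPT (two_point (\<mu> / t) t)) (ereal (REV_mech A (two_point (\<mu> / t) t)))"
proof (rule ereal_le_ratio)
  have "0 < t" and q: "0 \<le> \<mu> / t" "\<mu> / t \<le> 1"
    using assms by auto
  show "ereal \<mu> \<le> OPT (two_point (\<mu> / t) t)"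
    using OPT_two_point_ge[OF q less_imp_le[OF \<open>0 < t\<close>]] \<open>0 < t\<close> by simp
  show "0 \<le> REV_mech A (two_point (\<mu> / t) t)"
    unfolding REV_mech_two_point[OF A q] using q
    by (intro mult_nonneg_nonneg integral_nonneg_AE) (auto simp: posted_revenue_def)
  have "REV_mech A (two_point (\<mu> / t) t) * S = \<mu> / t * ((\<integral>p. posted_revenue t p \<partial>A) * S)"
    unfolding REV_mech_two_point[OF A q] by simp
  also have "\<dots> \<le> \<mu> / t * t"
    using G q(1) by (rule mult_left_mono)
  finally show "REV_mech A (two_point (\<mu> / t) t) * S \<le> \<mu>"
    using \<open>0 < t\<close> by simp
qed

text \<open>The discretisation of \<open>dt/t\<^sup>2\<close> on the grid \<open>t 0 \<le> \<dots> \<le> t n\<close>, plus the atom \<open>1/t n\<close>.\<close>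

definition grid_weight :: "(nat \<Rightarrow> real) \<Rightarrow> nat \<Rightarrow> nat \<Rightarrow> real" where
  "grid_weight t n j = (if j < n then 1 / t j - 1 / t (Suc j) else 1 / t n)"

lemma grid_weight_nonneg:
  assumes "\<And>j. j \<le> n \<Longrightarrow> 0 < t j" "\<And>j. j < n \<Longrightarrow> t j \<le> t (Suc j)" "j \<le> n"
  shows "0 \<le> grid_weight t n j"
  using assms(1)[of j] assms(1)[of "Suc j"] assms(1)[of n] assms(2)[of j] assms(3)
  by (auto simp: grid_weight_def frac_le)

lemma sum_grid_weight_above_le:
  assumes pos: "\<And>j. j \<le> n \<Longrightarrow> 0 < t j" and mono: "\<And>j. j < n \<Longrightarrow> t j \<le> t (Suc j)"
    and "m \<le> n" "0 \<le> p"
  shows "(\<Sum>j=m..n. grid_weight t n j * of_bool (p \<le> t j)) \<le> 1 / max p (t m)"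
  using \<open>m \<le> n\<close>
proof (induction m rule: inc_induct)
  case base
  show ?case
    using pos[of n] by (auto simp: grid_weight_def)
next
  case (step m)
  have "0 < t m" "0 < t (Suc m)"
    using pos step.hyps by auto
  have "(\<Sum>j=m..n. grid_weight t n j * of_bool (p \<le> t j))
      = grid_weight t n m * of_bool (p \<le> t m) + (\<Sum>j=Suc m..n. grid_weight t n j * of_bool (p \<le> t j))"
    by (rule sum.atLeast_Suc_atMost) (use step.hyps in simp)
  also have "\<dots> \<le> grid_weight t n m * of_bool (p \<le> t m) + 1 / max p (t (Suc m))"
    using step.IH by simp
  also have "\<dots> \<le> 1 / max p (t m)"
  proof (cases "p \<le> t m")
    case True
    then have "max p (t (Suc m)) = t (Suc m)" "max p (t m) = t m"
      using mono[of m] step.hyps by auto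
    then show ?thesis
      using True step.hyps by (simp add: grid_weight_def)
  next
    case False
    then show ?thesis
      using \<open>0 < t m\<close> by (simp add: frac_le)
  qed
  finally show ?case .
qed

lemma sum_grid_weight_posted_revenue_le:
  assumes "\<And>j. j \<le> n \<Longrightarrow> 0 < t j" "\<And>j. j < n \<Longrightarrow> t j \<le> t (Suc j)"
  shows "(\<Sum>j=0..n. grid_weight t n j * posted_revenue (t j) p) \<le> 1"
proof (cases "0 \<le> p")
  case True
  have "(\<Sum>j=0..n. grid_weight t n j * posted_revenue (t j) p)
      = p * (\<Sum>j=0..n. grid_weight t n j * of_bool (p \<le> t j))"
    unfolding sum_distrib_left using True by (intro sum.cong) (auto simp: posted_revenue_def)
  also have "\<dots> \<le> p * (1 / max p (t 0))"
    using sum_grid_weight_above_le[where t = t and n = n, OF assms] True by (intro mult_left_mono) auto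
  also have "\<dots> \<le> 1"
    using True assms(1)[of 0] by (simp add: divide_le_eq)
  finally show ?thesis .
qed (simp add: posted_revenue_def)

lemma sum_grid_weight_geometric:
  assumes "0 < a" "0 < c"
  shows "(\<Sum>j=0..n. grid_weight (\<lambda>j. a * c ^ j) n j * (a * c ^ j)) = 1 + real n * (1 - 1 / c)"
proof -
  have "{0..n} = insert n {..<n}"
    by auto
  moreover have "grid_weight (\<lambda>j. a * c ^ j) n j * (a * c ^ j) = 1 - 1 / c" if "j < n" for j
    using that assms by (simp add: grid_weight_def field_simps)
  ultimately show ?thesis
    using assms by (simp add: grid_weight_def)
qed

lemma ex_mult_weighted_sum_le:
  fixes w g t :: "'a \<Rightarrow> real"
  assumes "finite I" "\<And>i. i \<in> I \<Longrightarrow> 0 \<le> w i"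
    and "(\<Sum>i\<in>I. w i * g i) \<le> 1" and S: "0 < (\<Sum>i\<in>I. w i * t i)"
  shows "\<exists>i\<in>I. g i * (\<Sum>i\<in>I. w i * t i) \<le> t i"
proof (rule ccontr)
  define S where "S = (\<Sum>i\<in>I. w i * t i)"
  assume "\<not> ?thesis"
  then have less: "t i < g i * S" if "i \<in> I" for i
    using that unfolding S_def by force
  obtain k where "k \<in> I" "w k \<noteq> 0"
    using S by (metis (mono_tags, lifting) mult_zero_left less_irrefl sum.neutral)
  have "S = (\<Sum>i\<in>I. w i * t i)"
    by (simp add: S_def)
  also have "\<dots> < (\<Sum>i\<in>I. w i * (g i * S))"
  proof (rule sum_strict_mono_ex1[OF \<open>finite I\<close>])
    show "\<forall>i\<in>I. w i * t i \<le> w i * (g i * S)"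
      using less assms(2) by (simp add: mult_left_mono less_imp_le)
    show "\<exists>i\<in>I. w i * t i < w i * (g i * S)"
      using less[of k] \<open>k \<in> I\<close> \<open>w k \<noteq> 0\<close> assms(2)[of k] by (intro bexI[of _ k]) auto
  qed
  also have "\<dots> = S * (\<Sum>i\<in>I. w i * g i)"
    by (simp add: sum_distrib_left mult_ac)
  also have "\<dots> \<le> S"
    using assms(3) S unfolding S_def by (simp add: mult_le_cancel_left1)
  finally show False
    by simp
qed

lemma SUP_ratio_ge_grid_sum:
  assumes "0 < \<mu>" and A: "mechanism A"
    and lower: "\<And>j. j \<le> n \<Longrightarrow> \<mu> \<le> t j"
    and upper: "\<And>j. j \<le> n \<Longrightarrow> \<mu> * t j \<le> \<mu>\<^sup>2 + \<sigma>\<^sup>2"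
    and mono: "\<And>j. j < n \<Longrightarrow> t j \<le> t (Suc j)"
  shows "ereal (\<Sum>j=0..n. grid_weight t n j * t j)
           \<le> (SUP F\<in>{F. mu_sigma_dist \<mu> \<sigma> F}. ratio (OPT F) (ereal (REV_mech A F)))"
proof -
  define S where "S = (\<Sum>j=0..n. grid_weight t n j * t j)"
  define G where "G j = (\<integral>p. posted_revenue (t j) p \<partial>A)" for j
  have pos: "\<And>j. j \<le> n \<Longrightarrow> 0 < t j"
    using lower \<open>0 < \<mu>\<close> by (meson less_le_trans)
  note w_nonneg = grid_weight_nonneg[where t = t and n = n, OF pos mono]
  have "(\<Sum>j=0..n. grid_weight t n j * G j)
      = (\<integral>p. (\<Sum>j=0..n. grid_weight t n j * posted_revenue (t j) p) \<partial>A)"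
    unfolding G_def by (simp add: integrable_posted_revenue[OF A])
  also have "\<dots> \<le> 1"
    using A unfolding mechanism_def
    by (intro prob_space.integral_le_const AE_I2
        sum_grid_weight_posted_revenue_le[where t = t and n = n, OF pos mono]
        Bochner_Integration.integrable_sum integrable_mult_right integrable_posted_revenue[OF A]) auto
  finally have "(\<Sum>j=0..n. grid_weight t n j * G j) \<le> 1" .
  moreover have "0 < S"
  proof -
    have "0 < grid_weight t n n * t n"
      using pos[of n] by (simp add: grid_weight_def)
    also have "\<dots> \<le> S"
      unfolding S_def using w_nonneg pos
      by (intro member_le_sum) (auto intro: mult_nonneg_nonneg less_imp_le)
    finally show ?thesis .
  qed
  ultimately obtain j where j: "j \<le> n" "G j * S \<le> t j"
    using ex_mult_weighted_sum_le[of "{0..n}" "grid_weight t n" G t] w_nonneg unfolding S_def by auto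
  have "mu_sigma_dist \<mu> \<sigma> (two_point (\<mu> / t j) (t j))"
    using mu_sigma_dist_two_point \<open>0 < \<mu>\<close> lower upper j(1) by blast
  moreover have "ereal S
      \<le> ratio (OPT (two_point (\<mu> / t j) (t j))) (ereal (REV_mech A (two_point (\<mu> / t j) (t j))))"
    using ratio_two_point_ge[OF A \<open>0 < \<mu>\<close> lower[OF j(1)]] j(2) unfolding G_def by blast
  ultimately show ?thesis
    unfolding S_def by (blast intro: SUP_upper2)
qed

lemma SUP_ratio_ge_geometric_grid:
  assumes "0 < \<mu>" "mechanism A" "0 < n"
  shows "ereal (1 + real n * (1 - exp (- ln (1 + (\<sigma> / \<mu>)\<^sup>2) / real n)))
           \<le> (SUP F\<in>{F. mu_sigma_dist \<mu> \<sigma> F}. ratio (OPT F) (ereal (REV_mech A F)))"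
proof -
  define c where "c = exp (ln (1 + (\<sigma> / \<mu>)\<^sup>2) / real n)"
  define t where "t j = \<mu> * c ^ j" for j
  have "1 \<le> c"
    unfolding c_def using \<open>0 < n\<close> by simp
  have "c ^ n = 1 + (\<sigma> / \<mu>)\<^sup>2"
    unfolding c_def using \<open>0 < n\<close> by (simp add: exp_of_nat_mult[symmetric] add_pos_nonneg)
  then have top: "\<mu> * t n = \<mu>\<^sup>2 + \<sigma>\<^sup>2"
    unfolding t_def using \<open>0 < \<mu>\<close> by (simp add: field_simps power2_eq_square)
  have "ereal (\<Sum>j=0..n. grid_weight t n j * t j)
          \<le> (SUP F\<in>{F. mu_sigma_dist \<mu> \<sigma> F}. ratio (OPT F) (ereal (REV_mech A F)))"
  proof (rule SUP_ratio_ge_grid_sum[OF assms(1,2)])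
    show "\<mu> \<le> t j" for j
      unfolding t_def using \<open>0 < \<mu>\<close> \<open>1 \<le> c\<close> by (simp add: one_le_power)
    show "t j \<le> t (Suc j)" for j
      unfolding t_def using \<open>0 < \<mu>\<close> \<open>1 \<le> c\<close> by simp
    show "\<mu> * t j \<le> \<mu>\<^sup>2 + \<sigma>\<^sup>2" if "j \<le> n" for j
      unfolding top[symmetric] t_def using \<open>0 < \<mu>\<close> \<open>1 \<le> c\<close> that by (simp add: power_increasing)
  qed
  also have "(\<Sum>j=0..n. grid_weight t n j * t j) = 1 + real n * (1 - 1 / c)"
    unfolding t_def using \<open>0 < \<mu>\<close> \<open>1 \<le> c\<close> by (simp add: sum_grid_weight_geometric)
  finally show ?thesis
    unfolding c_def by (simp add: exp_minus field_simps)
qed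

lemma tendsto_mult_one_minus_exp:
  fixes L :: real
  assumes "0 \<le> L"
  shows "(\<lambda>n. real n * (1 - exp (- L / real n))) \<longlonglongrightarrow> L"
proof (cases "L = 0")
  case False
  then show ?thesis
    using assms by real_asymp
qed simp

theorem theorem3:
  fixes \<mu> \<sigma> :: real
  assumes "\<mu> > 0" and "\<sigma> \<ge> 0"
  shows "APX \<mu> \<sigma> \<ge> ereal (1 + ln (1 + (\<sigma> / \<mu>)\<^sup>2))"
  unfolding APX_def
proof (rule INF_greatest)
  fix A
  assume "A \<in> {A. mechanism A}"
  define L where "L = ln (1 + (\<sigma> / \<mu>)\<^sup>2)"
  have "(\<lambda>n. ereal (1 + real n * (1 - exp (- L / real n)))) \<longlonglongrightarrow> ereal (1 + L)"
    unfolding L_def by (intro tendsto_ereal tendsto_add tendsto_const tendsto_mult_one_minus_exp) simp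
  then show "ereal (1 + L)
      \<le> (SUP F\<in>{F. mu_sigma_dist \<mu> \<sigma> F}. ratio (OPT F) (ereal (REV_mech A F)))"
    by (rule Lim_bounded[where M = 1])
       (use SUP_ratio_ge_geometric_grid \<open>\<mu> > 0\<close> \<open>A \<in> {A. mechanism A}\<close> in \<open>auto simp: L_def\<close>)
qed

end
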